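(* Let $(X_n)_{n\ge1}$ and $(Y_n)_{n\ge1}$ be two sequences of random variables on a common probability space such that $0\le X_n\le\kappa Y_n$ for some positive constant $\kappa$ (with $0<\mathbb{E}(Y_n)<\infty$). If $Y_n/\mathbb{E}(Y_n)\to1$ in probability, then $$\frac{\mathbb{E}(X_n)}{\mathbb{E}(Y_n)}\to0\iff\frac{X_n}{Y_n}\to0\text{ in probability}.$$ If, in addition, $\mathbb{E}(X_n)\ge\tau\mathbb{E}(Y_n)$ for some $\tau>0$ and $Y_n/\mathbb{E}(Y_n)\to1$ in quadratic mean, then $$\frac{X_n}{\mathbb{E}(X_n)}\to1\text{ in probability}\implies\frac{\mathrm{Var}(X_n)}{[\mathbb{E}(X_n)]^2}\to0.$$ *)

theory Defs
  imports "HOL-Probability.Probability"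
begin

definition conv_in_prob :: "'a measure \<Rightarrow> (nat \<Rightarrow> 'a \<Rightarrow> real) \<Rightarrow> real \<Rightarrow> bool" where
  "conv_in_prob M Z c \<longleftrightarrow>
     (\<forall>e>0. (\<lambda>n. measure M {\<omega> \<in> space M. \<bar>Z n \<omega> - c\<bar> > e}) \<longlonglongrightarrow> 0)"

definition conv_in_qm :: "'a measure \<Rightarrow> (nat \<Rightarrow> 'a \<Rightarrow> real) \<Rightarrow> real \<Rightarrow> bool" where
  "conv_in_qm M Z c \<longleftrightarrow>
     (\<forall>n. integrable M (\<lambda>\<omega>. (Z n \<omega> - c)^2)) \<and>
     (\<lambda>n. integral\<^sup>L M (\<lambda>\<omega>. (Z n \<omega> - c)^2)) \<longlonglongrightarrow> 0"

end

theory Submission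
  imports Defs
begin

text \<open>Write Z = Y / E Y. Since Z \<ge> 0 has mean one, Z tending to 1 in probability already
  forces E |Z - 1| to tend to 0: indeed |Z - 1| = (Z - 1) + 2 (1 - Z)^+, and the negative part
  (1 - Z)^+ is bounded by 1. The pointwise bounds X / E Y \<le> X / Y + \<kappa> |Z - 1| and
  X / Y \<le> 2 X / E Y + 2 \<kappa> |Z - 1| then transfer convergence in both directions, using bounded
  convergence for the bounded ratio X / Y and Markov's inequality for X / E Y.
  For the variance, U = X / E X satisfies U \<le> c Z with c = max 1 (\<kappa> / \<tau>), whence
  (U - 1)^2 \<le> 2 c min |U - 1| (2 c) + 4 c^2 (Z - 1)^2; the first term is bounded and tends to 0
  in probability, the second tends to 0 in mean by the quadratic-mean hypothesis.\<close>

lemma dominated_ratio_bounds: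
  fixes x y \<kappa> :: real
  assumes "0 \<le> x" "x \<le> \<kappa> * y" "\<kappa> > 0"
  shows "0 \<le> x / y \<and> x / y \<le> \<kappa>"
proof (cases "y = 0")
  case False
  have "0 \<le> \<kappa> * y" using assms(1,2) by linarith
  with \<open>\<kappa> > 0\<close> False have "y > 0" by (simp add: zero_le_mult_iff)
  with assms show ?thesis by (simp add: field_simps)
qed (use assms in simp)

lemma ratio_le_scaled_plus_deviation:
  fixes x y m \<kappa> :: real
  assumes "m > 0" "0 \<le> x" "x \<le> \<kappa> * y" "\<kappa> > 0"
  shows "x / y \<le> 2 * (x / m) + 2 * \<kappa> * \<bar>y / m - 1\<bar>"
proof (cases "y \<ge> m / 2")
  case True
  then have "x / y \<le> x / (m / 2)"
    using assms by (intro divide_left_mono) auto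
  also have "\<dots> = 2 * (x / m)" by simp
  also have "\<dots> \<le> 2 * (x / m) + 2 * \<kappa> * \<bar>y / m - 1\<bar>" using assms(4) by simp
  finally show ?thesis .
next
  case False
  then have "1 / 2 < \<bar>y / m - 1\<bar>" using assms(1) by (simp add: field_simps)
  then have "\<kappa> \<le> 2 * \<kappa> * \<bar>y / m - 1\<bar>" using assms(4) by simp
  moreover have "x / y \<le> \<kappa>" using dominated_ratio_bounds[OF assms(2-4)] by simp
  moreover have "0 \<le> x / m" using assms by simp
  ultimately show ?thesis by linarith
qed

lemma scaled_le_ratio_plus_deviation:
  fixes x y m \<kappa> :: real
  assumes "m > 0" "0 \<le> x" "x \<le> \<kappa> * y" "\<kappa> > 0"
  shows "x / m \<le> x / y + \<kappa> * \<bar>y / m - 1\<bar>"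
proof (cases "y = 0")
  case False
  have "0 \<le> x / y" "x / y \<le> \<kappa>" using dominated_ratio_bounds[OF assms(2-4)] by auto
  have "x / m = x / y + x / y * (y / m - 1)" using False assms(1) by (simp add: field_simps)
  also have "\<dots> \<le> x / y + x / y * \<bar>y / m - 1\<bar>"
    using \<open>0 \<le> x / y\<close> by (intro add_left_mono mult_left_mono) auto
  also have "\<dots> \<le> x / y + \<kappa> * \<bar>y / m - 1\<bar>"
    using \<open>x / y \<le> \<kappa>\<close> by (intro add_left_mono mult_right_mono) auto
  finally show ?thesis .
qed (use assms in simp)

text \<open>If u - 1 is large then so is z - 1, because u is dominated by c z.\<close>

lemma sq_deviation_le_truncated_plus_sq_deviation:
  fixes u z c :: real
  assumes "0 \<le> u" "u \<le> c * z" "c \<ge> 1"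
  shows "(u - 1)\<^sup>2 \<le> 2 * c * min \<bar>u - 1\<bar> (2 * c) + 4 * c\<^sup>2 * (z - 1)\<^sup>2"
proof (cases "\<bar>u - 1\<bar> \<le> 2 * c")
  case True
  have "(u - 1)\<^sup>2 = \<bar>u - 1\<bar> * \<bar>u - 1\<bar>" by (simp add: power2_eq_square)
  also have "\<dots> \<le> 2 * c * \<bar>u - 1\<bar>" using True by (intro mult_right_mono) auto
  also have "\<dots> = 2 * c * min \<bar>u - 1\<bar> (2 * c)" using True by (simp add: min_def)
  finally show ?thesis by (simp add: add_increasing2)
next
  case False
  then have "1 + 2 * c < u" using assms(1,3) by (auto simp: abs_if split: if_splits)
  moreover have "2 * c * (z - 1) = 2 * (c * z) - 2 * c" by (simp add: algebra_simps)
  ultimately have "u - 1 \<le> 2 * c * (z - 1)" using assms(2) by linarith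
  then have "(u - 1)\<^sup>2 \<le> (2 * c * (z - 1))\<^sup>2"
    using \<open>1 + 2 * c < u\<close> assms(3) by (intro power_mono) auto
  moreover have "0 \<le> 2 * c * min \<bar>u - 1\<bar> (2 * c)" using assms(3) by simp
  ultimately show ?thesis by (simp add: power_mult_distrib)
qed

context prob_space
begin

lemma tendsto_prob_zero_if_subset_Un:
  assumes "\<And>n. A n \<subseteq> B n \<union> C n" "\<And>n. B n \<in> events" "\<And>n. C n \<in> events"
    and "(\<lambda>n. prob (B n)) \<longlonglongrightarrow> 0" "(\<lambda>n. prob (C n)) \<longlonglongrightarrow> 0"
  shows "(\<lambda>n. prob (A n)) \<longlonglongrightarrow> 0"
proof (rule Lim_null_comparison[OF always_eventually tendsto_add_zero[OF assms(4,5)]])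
  have "prob (A n) \<le> prob (B n) + prob (C n)" for n
  proof -
    have "prob (A n) \<le> prob (B n \<union> C n)" using assms by (intro finite_measure_mono) auto
    also have "\<dots> \<le> prob (B n) + prob (C n)" using assms by (intro measure_subadditive) auto
    finally show ?thesis .
  qed
  then show "\<forall>n. norm (prob (A n)) \<le> prob (B n) + prob (C n)" by simp
qed

lemma conv_in_prob_zero_if_abs_le_add:
  assumes [measurable]: "\<And>n. V n \<in> borel_measurable M" "\<And>n. W n \<in> borel_measurable M"
    and "conv_in_prob M V 0" "conv_in_prob M W 0" "a > 0" "b > 0"
    and bound: "\<And>n \<omega>. \<omega> \<in> space M \<Longrightarrow> \<bar>R n \<omega>\<bar> \<le> a * \<bar>V n \<omega>\<bar> + b * \<bar>W n \<omega>\<bar>"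
  shows "conv_in_prob M R 0"
  unfolding conv_in_prob_def
proof (intro allI impI)
  fix e :: real assume "e > 0"
  then have "e / (2 * a) > 0" "e / (2 * b) > 0" using \<open>a > 0\<close> \<open>b > 0\<close> by simp_all
  then have V: "(\<lambda>n. prob {\<omega> \<in> space M. \<bar>V n \<omega> - 0\<bar> > e / (2 * a)}) \<longlonglongrightarrow> 0"
    and W: "(\<lambda>n. prob {\<omega> \<in> space M. \<bar>W n \<omega> - 0\<bar> > e / (2 * b)}) \<longlonglongrightarrow> 0"
    using assms(3,4) unfolding conv_in_prob_def by blast+
  show "(\<lambda>n. prob {\<omega> \<in> space M. \<bar>R n \<omega> - 0\<bar> > e}) \<longlonglongrightarrow> 0"
  proof (rule tendsto_prob_zero_if_subset_Un[OF _ _ _ V W])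
    fix n
    have "\<bar>R n \<omega>\<bar> \<le> e"
      if "\<omega> \<in> space M" "\<bar>V n \<omega>\<bar> \<le> e / (2 * a)" "\<bar>W n \<omega>\<bar> \<le> e / (2 * b)" for \<omega>
    proof -
      have "a * \<bar>V n \<omega>\<bar> \<le> e / 2" "b * \<bar>W n \<omega>\<bar> \<le> e / 2"
        using that \<open>a > 0\<close> \<open>b > 0\<close> by (simp_all add: field_simps)
      then show ?thesis using bound[OF that(1), of n] by linarith
    qed
    then show "{\<omega> \<in> space M. \<bar>R n \<omega> - 0\<bar> > e} \<subseteq>
        {\<omega> \<in> space M. \<bar>V n \<omega> - 0\<bar> > e / (2 * a)} \<union> {\<omega> \<in> space M. \<bar>W n \<omega> - 0\<bar> > e / (2 * b)}"
      by force
  qed auto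
qed

lemma conv_in_prob_zero_if_abs_le:
  assumes [measurable]: "\<And>n. W n \<in> borel_measurable M"
    and "conv_in_prob M W c"
    and "\<And>n \<omega>. \<omega> \<in> space M \<Longrightarrow> \<bar>V n \<omega>\<bar> \<le> \<bar>W n \<omega> - c\<bar>"
  shows "conv_in_prob M V 0"
proof (rule conv_in_prob_zero_if_abs_le_add[where a = 1 and b = 1])
  show "conv_in_prob M (\<lambda>n \<omega>. W n \<omega> - c) 0"
    using assms(2) by (simp add: conv_in_prob_def)
  show "conv_in_prob M (\<lambda>_ _. 0) 0"
    by (simp add: conv_in_prob_def)
qed (use assms(3) in auto)

lemma conv_in_prob_zero_if_expectation_tendsto:
  assumes "\<And>n. integrable M (W n)" "\<And>n \<omega>. \<omega> \<in> space M \<Longrightarrow> 0 \<le> W n \<omega>"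
    and "(\<lambda>n. expectation (W n)) \<longlonglongrightarrow> 0"
  shows "conv_in_prob M W 0"
  unfolding conv_in_prob_def
proof (intro allI impI)
  fix e :: real assume "e > 0"
  have Markov: "prob {\<omega> \<in> space M. \<bar>W n \<omega> - 0\<bar> > e} \<le> expectation (W n) / e" for n
  proof -
    have [measurable]: "W n \<in> borel_measurable M" using assms(1) by auto
    have "prob {\<omega> \<in> space M. \<bar>W n \<omega> - 0\<bar> > e} \<le> prob {\<omega> \<in> space M. W n \<omega> \<ge> e}"
      using assms(2) by (intro finite_measure_mono) auto
    also have "\<dots> \<le> expectation (W n) / e"
      by (rule integral_Markov_inequality_measure[where A = "space M"]) (use assms \<open>e > 0\<close> in auto)
    finally show ?thesis .
  qed
  show "(\<lambda>n. prob {\<omega> \<in> space M. \<bar>W n \<omega> - 0\<bar> > e}) \<longlonglongrightarrow> 0"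
    by (rule Lim_null_comparison[OF always_eventually tendsto_divide_zero[OF assms(3), of e]])
      (use Markov in simp)
qed

lemma expectation_abs_le_prob_bound:
  assumes [measurable]: "W \<in> borel_measurable M"
    and bound: "\<And>\<omega>. \<omega> \<in> space M \<Longrightarrow> \<bar>W \<omega>\<bar> \<le> B" and "e \<ge> 0"
  shows "expectation (\<lambda>\<omega>. \<bar>W \<omega>\<bar>) \<le> e + B * prob {\<omega> \<in> space M. \<bar>W \<omega>\<bar> > e}"
proof -
  let ?A = "{\<omega> \<in> space M. \<bar>W \<omega>\<bar> > e}"
  have "expectation (\<lambda>\<omega>. \<bar>W \<omega>\<bar>) \<le> expectation (\<lambda>\<omega>. e + B * indicator ?A \<omega>)"
  proof (rule integral_mono)
    show "integrable M (\<lambda>\<omega>. e + B * indicator ?A \<omega>)"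
      by (intro Bochner_Integration.integrable_add integrable_mult_right integrable_real_indicator)
        (auto simp: less_top[symmetric])
    show "integrable M (\<lambda>\<omega>. \<bar>W \<omega>\<bar>)"
      using bound by (intro integrable_const_bound[where B = B]) auto
    show "\<bar>W \<omega>\<bar> \<le> e + B * indicator ?A \<omega>" if "\<omega> \<in> space M" for \<omega>
      using bound[OF that] that \<open>e \<ge> 0\<close> by (auto simp: indicator_def)
  qed
  also have "\<dots> = e + B * prob ?A"
    by (simp add: prob_space less_top[symmetric])
  finally show ?thesis .
qed

lemma expectation_tendsto_zero_if_conv_in_prob_bounded:
  assumes [measurable]: "\<And>n. W n \<in> borel_measurable M"
    and bound: "\<And>n \<omega>. \<omega> \<in> space M \<Longrightarrow> \<bar>W n \<omega>\<bar> \<le> B"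
    and "conv_in_prob M W 0"
  shows "(\<lambda>n. expectation (W n)) \<longlonglongrightarrow> 0"
proof (rule tendstoI)
  fix r :: real assume "r > 0"
  obtain \<omega> where "\<omega> \<in> space M" using not_empty by blast
  then have "B \<ge> 0" using bound[of \<omega> 0] by linarith
  have "r / 2 > 0" "r / (2 * (B + 1)) > 0" using \<open>r > 0\<close> \<open>B \<ge> 0\<close> by auto
  then have "(\<lambda>n. prob {\<omega> \<in> space M. \<bar>W n \<omega> - 0\<bar> > r / 2}) \<longlonglongrightarrow> 0"
    using assms(3) unfolding conv_in_prob_def by blast
  then have "\<forall>\<^sub>F n in sequentially. prob {\<omega> \<in> space M. \<bar>W n \<omega>\<bar> > r / 2} < r / (2 * (B + 1))"
    using \<open>r / (2 * (B + 1)) > 0\<close> by (auto dest: order_tendstoD)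
  then show "\<forall>\<^sub>F n in sequentially. dist (expectation (W n)) 0 < r"
  proof eventually_elim
    case (elim n)
    have "dist (expectation (W n)) 0 \<le> expectation (\<lambda>\<omega>. \<bar>W n \<omega>\<bar>)"
      using integral_norm_bound[of M "W n"] by simp
    also have "\<dots> \<le> r / 2 + B * prob {\<omega> \<in> space M. \<bar>W n \<omega>\<bar> > r / 2}"
      using bound \<open>r > 0\<close> by (intro expectation_abs_le_prob_bound) auto
    also have "B * prob {\<omega> \<in> space M. \<bar>W n \<omega>\<bar> > r / 2} \<le> B * (r / (2 * (B + 1)))"
      using elim \<open>B \<ge> 0\<close> by (intro mult_left_mono) auto
    also have "\<dots> < r / 2"
      using \<open>r > 0\<close> \<open>B \<ge> 0\<close> by (simp add: field_simps)
    finally show ?case by simp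
  qed
qed

lemma expectation_abs_diff_one_tendsto_zero:
  assumes "\<And>n. integrable M (Z n)" "\<And>n \<omega>. \<omega> \<in> space M \<Longrightarrow> 0 \<le> Z n \<omega>"
    and "\<And>n. expectation (Z n) = 1" "conv_in_prob M Z 1"
  shows "(\<lambda>n. expectation (\<lambda>\<omega>. \<bar>Z n \<omega> - 1\<bar>)) \<longlonglongrightarrow> 0"
proof -
  define F where "F n \<omega> = max 0 (1 - Z n \<omega>)" for n \<omega>
  have [measurable]: "Z n \<in> borel_measurable M" "F n \<in> borel_measurable M" for n
    using assms(1) unfolding F_def by auto
  have F_bound: "\<bar>F n \<omega>\<bar> \<le> 1" if "\<omega> \<in> space M" for n \<omega>
    using assms(2)[OF that, of n] by (simp add: F_def)
  have "conv_in_prob M F 0"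
    by (rule conv_in_prob_zero_if_abs_le[OF _ assms(4)]) (auto simp: F_def)
  then have F_tendsto: "(\<lambda>n. expectation (F n)) \<longlonglongrightarrow> 0"
    using F_bound by (intro expectation_tendsto_zero_if_conv_in_prob_bounded) auto
  have abs_eq: "expectation (\<lambda>\<omega>. \<bar>Z n \<omega> - 1\<bar>) = 2 * expectation (F n)" for n
  proof -
    have "integrable M (F n)"
      using F_bound by (intro integrable_const_bound[where B = 1]) auto
    have "expectation (\<lambda>\<omega>. \<bar>Z n \<omega> - 1\<bar>) = expectation (\<lambda>\<omega>. (Z n \<omega> - 1) + 2 * F n \<omega>)"
      by (rule Bochner_Integration.integral_cong) (auto simp: F_def abs_if max_def)
    also have "\<dots> = 2 * expectation (F n)"
      using assms(1,3) \<open>integrable M (F n)\<close> by (simp add: prob_space)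
    finally show ?thesis .
  qed
  show ?thesis
    unfolding abs_eq by (rule tendsto_mult_right_zero[OF F_tendsto])
qed

lemma variance_div_expectation_sq:
  fixes X :: "'a \<Rightarrow> real"
  assumes "expectation X \<noteq> 0"
  shows "variance X / (expectation X)\<^sup>2 = expectation (\<lambda>\<omega>. (X \<omega> / expectation X - 1)\<^sup>2)"
proof -
  have "X \<omega> / expectation X - 1 = (X \<omega> - expectation X) / expectation X" for \<omega>
    using assms by (subst diff_divide_distrib) simp
  then have "expectation (\<lambda>\<omega>. (X \<omega> / expectation X - 1)\<^sup>2)
      = expectation (\<lambda>\<omega>. (X \<omega> - expectation X)\<^sup>2 / (expectation X)\<^sup>2)"
    by (simp only: power_divide)
  also have "\<dots> = variance X / (expectation X)\<^sup>2"
    by (rule integral_divide_zero)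
  finally show ?thesis by (rule sym)
qed

lemma conv_in_qm_if_conv_in_prob_dominated:
  assumes [measurable]: "\<And>n. U n \<in> borel_measurable M"
    and "conv_in_prob M U 1" "conv_in_qm M Z 1" "c \<ge> 1"
    and U_bounds: "\<And>n \<omega>. \<omega> \<in> space M \<Longrightarrow> 0 \<le> U n \<omega> \<and> U n \<omega> \<le> c * Z n \<omega>"
  shows "conv_in_qm M U 1"
proof -
  define G where "G n \<omega> = min \<bar>U n \<omega> - 1\<bar> (2 * c)" for n \<omega>
  have [measurable]: "G n \<in> borel_measurable M" for n unfolding G_def by measurable
  have G_bounds: "0 \<le> G n \<omega>" "\<bar>G n \<omega>\<bar> \<le> 2 * c" for n \<omega>
    using \<open>c \<ge> 1\<close> by (simp_all add: G_def)
  have integrable_G: "integrable M (G n)" for n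
    using G_bounds by (intro integrable_const_bound[where B = "2 * c"]) auto
  have "conv_in_prob M G 0"
    by (rule conv_in_prob_zero_if_abs_le[OF _ assms(2)]) (use \<open>c \<ge> 1\<close> in \<open>auto simp: G_def\<close>)
  then have G_tendsto: "(\<lambda>n. expectation (G n)) \<longlonglongrightarrow> 0"
    using G_bounds by (intro expectation_tendsto_zero_if_conv_in_prob_bounded) auto
  have Z_qm: "integrable M (\<lambda>\<omega>. (Z n \<omega> - 1)\<^sup>2)" "(\<lambda>n. expectation (\<lambda>\<omega>. (Z n \<omega> - 1)\<^sup>2)) \<longlonglongrightarrow> 0"
    for n using assms(3) by (simp_all add: conv_in_qm_def)
  have pointwise: "(U n \<omega> - 1)\<^sup>2 \<le> 2 * c * G n \<omega> + 4 * c\<^sup>2 * (Z n \<omega> - 1)\<^sup>2"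
    if "\<omega> \<in> space M" for n \<omega>
    unfolding G_def using U_bounds[OF that, of n] \<open>c \<ge> 1\<close>
    by (intro sq_deviation_le_truncated_plus_sq_deviation) auto
  have integrable_sq: "integrable M (\<lambda>\<omega>. (U n \<omega> - 1)\<^sup>2)" for n
  proof (rule Bochner_Integration.integrable_bound)
    show "integrable M (\<lambda>\<omega>. 2 * c * G n \<omega> + 4 * c\<^sup>2 * (Z n \<omega> - 1)\<^sup>2)"
      using integrable_G Z_qm(1) by simp
    show "AE \<omega> in M. norm ((U n \<omega> - 1)\<^sup>2) \<le> norm (2 * c * G n \<omega> + 4 * c\<^sup>2 * (Z n \<omega> - 1)\<^sup>2)"
      using pointwise by (intro AE_I2) (simp add: order_trans[OF _ abs_ge_self])
  qed simp
  have bound: "norm (expectation (\<lambda>\<omega>. (U n \<omega> - 1)\<^sup>2))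
      \<le> 2 * c * expectation (G n) + 4 * c\<^sup>2 * expectation (\<lambda>\<omega>. (Z n \<omega> - 1)\<^sup>2)" for n
  proof -
    have "norm (expectation (\<lambda>\<omega>. (U n \<omega> - 1)\<^sup>2)) = expectation (\<lambda>\<omega>. (U n \<omega> - 1)\<^sup>2)"
      by (simp add: integral_nonneg)
    also have "\<dots> \<le> expectation (\<lambda>\<omega>. 2 * c * G n \<omega> + 4 * c\<^sup>2 * (Z n \<omega> - 1)\<^sup>2)"
      using integrable_sq integrable_G Z_qm(1) pointwise by (intro integral_mono) auto
    also have "\<dots> = 2 * c * expectation (G n) + 4 * c\<^sup>2 * expectation (\<lambda>\<omega>. (Z n \<omega> - 1)\<^sup>2)"
      using integrable_G Z_qm(1) by simp
    finally show ?thesis .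
  qed
  have "(\<lambda>n. 2 * c * expectation (G n) + 4 * c\<^sup>2 * expectation (\<lambda>\<omega>. (Z n \<omega> - 1)\<^sup>2)) \<longlonglongrightarrow> 0"
    by (intro tendsto_add_zero tendsto_mult_right_zero G_tendsto Z_qm(2))
  then have "(\<lambda>n. expectation (\<lambda>\<omega>. (U n \<omega> - 1)\<^sup>2)) \<longlonglongrightarrow> 0"
    by (rule Lim_null_comparison[OF always_eventually[OF allI[OF bound]]])
  with integrable_sq show ?thesis
    by (simp add: conv_in_qm_def)
qed

end

locale dominated_sequences = prob_space +
  fixes X Y :: "nat \<Rightarrow> 'a \<Rightarrow> real" and \<kappa> :: real
  assumes measurable_X [measurable]: "\<And>n. X n \<in> borel_measurable M"
    and measurable_Y [measurable]: "\<And>n. Y n \<in> borel_measurable M"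
    and kappa_pos: "\<kappa> > 0"
    and X_bounds: "\<And>n \<omega>. \<omega> \<in> space M \<Longrightarrow> 0 \<le> X n \<omega> \<and> X n \<omega> \<le> \<kappa> * Y n \<omega>"
    and integrable_Y: "\<And>n. integrable M (Y n)"
    and expectation_Y_pos: "\<And>n. expectation (Y n) > 0"
begin

lemma Y_nonneg:
  assumes "\<omega> \<in> space M" shows "0 \<le> Y n \<omega>"
proof -
  have "0 \<le> \<kappa> * Y n \<omega>" using X_bounds[OF assms, of n] by linarith
  then show ?thesis using kappa_pos by (simp add: zero_le_mult_iff)
qed

lemma integrable_X: "integrable M (X n)"
proof (rule Bochner_Integration.integrable_bound)
  show "integrable M (\<lambda>\<omega>. \<kappa> * Y n \<omega>)" using integrable_Y by simp
  show "AE \<omega> in M. norm (X n \<omega>) \<le> norm (\<kappa> * Y n \<omega>)"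
  proof (rule AE_I2)
    fix \<omega> assume "\<omega> \<in> space M"
    then show "norm (X n \<omega>) \<le> norm (\<kappa> * Y n \<omega>)" using X_bounds[of \<omega> n] by auto
  qed
qed simp

lemma expectation_abs_normalized_Y_minus_one_tendsto:
  assumes "conv_in_prob M (\<lambda>n \<omega>. Y n \<omega> / expectation (Y n)) 1"
  shows "(\<lambda>n. expectation (\<lambda>\<omega>. \<bar>Y n \<omega> / expectation (Y n) - 1\<bar>)) \<longlonglongrightarrow> 0"
proof (rule expectation_abs_diff_one_tendsto_zero[OF _ _ _ assms])
  show "integrable M (\<lambda>\<omega>. Y n \<omega> / expectation (Y n))" for n using integrable_Y by simp
  show "0 \<le> Y n \<omega> / expectation (Y n)" if "\<omega> \<in> space M" for n \<omega>
    using Y_nonneg[OF that] expectation_Y_pos[of n] by simp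
  show "expectation (\<lambda>\<omega>. Y n \<omega> / expectation (Y n)) = 1" for n
    using expectation_Y_pos[of n] by simp
qed

lemma conv_in_prob_ratio_if_expectation_ratio_tendsto:
  assumes "conv_in_prob M (\<lambda>n \<omega>. Y n \<omega> / expectation (Y n)) 1"
    and "(\<lambda>n. expectation (X n) / expectation (Y n)) \<longlonglongrightarrow> 0"
  shows "conv_in_prob M (\<lambda>n \<omega>. X n \<omega> / Y n \<omega>) 0"
proof -
  define m where "m n = expectation (Y n)" for n
  have "m n > 0" for n using expectation_Y_pos by (simp add: m_def)
  have V: "conv_in_prob M (\<lambda>n \<omega>. X n \<omega> / m n) 0"
  proof (rule conv_in_prob_zero_if_expectation_tendsto)
    show "integrable M (\<lambda>\<omega>. X n \<omega> / m n)" for n using integrable_X by simp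
    show "0 \<le> X n \<omega> / m n" if "\<omega> \<in> space M" for n \<omega>
      using X_bounds[OF that, of n] \<open>m n > 0\<close> by simp
    show "(\<lambda>n. expectation (\<lambda>\<omega>. X n \<omega> / m n)) \<longlonglongrightarrow> 0"
      using assms(2) by (simp add: m_def)
  qed
  have W: "conv_in_prob M (\<lambda>n \<omega>. Y n \<omega> / m n - 1) 0"
    using assms(1) by (simp add: conv_in_prob_def m_def)
  have bound: "\<bar>X n \<omega> / Y n \<omega>\<bar> \<le> 2 * \<bar>X n \<omega> / m n\<bar> + 2 * \<kappa> * \<bar>Y n \<omega> / m n - 1\<bar>"
    if "\<omega> \<in> space M" for n \<omega>
  proof -
    have "0 \<le> X n \<omega> / Y n \<omega>"
      using X_bounds[OF that, of n] kappa_pos dominated_ratio_bounds[of "X n \<omega>" \<kappa> "Y n \<omega>"] by simp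
    moreover have "X n \<omega> / Y n \<omega> \<le> 2 * (X n \<omega> / m n) + 2 * \<kappa> * \<bar>Y n \<omega> / m n - 1\<bar>"
      using X_bounds[OF that, of n] \<open>m n > 0\<close> kappa_pos by (intro ratio_le_scaled_plus_deviation) auto
    ultimately show ?thesis
      using X_bounds[OF that, of n] \<open>m n > 0\<close> by simp
  qed
  show ?thesis
  proof (rule conv_in_prob_zero_if_abs_le_add[OF _ _ V W _ _ bound])
    show "(\<lambda>\<omega>. X n \<omega> / m n) \<in> borel_measurable M" for n by measurable
    show "(\<lambda>\<omega>. Y n \<omega> / m n - 1) \<in> borel_measurable M" for n by measurable
  qed (use kappa_pos in auto)
qed

lemma expectation_ratio_tendsto_if_conv_in_prob_ratio:
  assumes "conv_in_prob M (\<lambda>n \<omega>. Y n \<omega> / expectation (Y n)) 1"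
    and "conv_in_prob M (\<lambda>n \<omega>. X n \<omega> / Y n \<omega>) 0"
  shows "(\<lambda>n. expectation (X n) / expectation (Y n)) \<longlonglongrightarrow> 0"
proof -
  define m where "m n = expectation (Y n)" for n
  have "m n > 0" for n using expectation_Y_pos by (simp add: m_def)
  have [measurable]: "(\<lambda>\<omega>. X n \<omega> / Y n \<omega>) \<in> borel_measurable M" for n by measurable
  have ratio_bound: "\<bar>X n \<omega> / Y n \<omega>\<bar> \<le> \<kappa>" if "\<omega> \<in> space M" for n \<omega>
    using X_bounds[OF that, of n] kappa_pos dominated_ratio_bounds[of "X n \<omega>" \<kappa> "Y n \<omega>"] by auto
  have integrable_ratio: "integrable M (\<lambda>\<omega>. X n \<omega> / Y n \<omega>)" for n
    using ratio_bound by (intro integrable_const_bound[where B = \<kappa>]) auto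
  have ratio_tendsto: "(\<lambda>n. expectation (\<lambda>\<omega>. X n \<omega> / Y n \<omega>)) \<longlonglongrightarrow> 0"
    using assms(2) ratio_bound by (intro expectation_tendsto_zero_if_conv_in_prob_bounded) auto
  have deviation_tendsto: "(\<lambda>n. expectation (\<lambda>\<omega>. \<bar>Y n \<omega> / m n - 1\<bar>)) \<longlonglongrightarrow> 0"
    using expectation_abs_normalized_Y_minus_one_tendsto[OF assms(1)] by (simp add: m_def)
  have bound: "norm (expectation (X n) / m n)
      \<le> expectation (\<lambda>\<omega>. X n \<omega> / Y n \<omega>) + \<kappa> * expectation (\<lambda>\<omega>. \<bar>Y n \<omega> / m n - 1\<bar>)" for n
  proof -
    have "0 \<le> expectation (X n)" using X_bounds by (simp add: integral_nonneg)
    then have "norm (expectation (X n) / m n) = expectation (\<lambda>\<omega>. X n \<omega> / m n)"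
      using \<open>m n > 0\<close> by simp
    also have "\<dots> \<le> expectation (\<lambda>\<omega>. X n \<omega> / Y n \<omega> + \<kappa> * \<bar>Y n \<omega> / m n - 1\<bar>)"
      using integrable_X integrable_ratio integrable_Y X_bounds \<open>m n > 0\<close> kappa_pos
      by (intro integral_mono scaled_le_ratio_plus_deviation) auto
    also have "\<dots> = expectation (\<lambda>\<omega>. X n \<omega> / Y n \<omega>) + \<kappa> * expectation (\<lambda>\<omega>. \<bar>Y n \<omega> / m n - 1\<bar>)"
      using integrable_ratio integrable_Y by simp
    finally show ?thesis .
  qed
  have "(\<lambda>n. expectation (\<lambda>\<omega>. X n \<omega> / Y n \<omega>) + \<kappa> * expectation (\<lambda>\<omega>. \<bar>Y n \<omega> / m n - 1\<bar>))
      \<longlonglongrightarrow> 0"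
    by (intro tendsto_add_zero tendsto_mult_right_zero ratio_tendsto deviation_tendsto)
  then show ?thesis
    unfolding m_def[symmetric] by (rule Lim_null_comparison[OF always_eventually[OF allI[OF bound]]])
qed

lemma relative_variance_tendsto_zero:
  assumes "\<tau> > 0" and expectation_X_ge: "\<And>n. expectation (X n) \<ge> \<tau> * expectation (Y n)"
    and "conv_in_qm M (\<lambda>n \<omega>. Y n \<omega> / expectation (Y n)) 1"
    and "conv_in_prob M (\<lambda>n \<omega>. X n \<omega> / expectation (X n)) 1"
  shows "(\<lambda>n. variance (X n) / (expectation (X n))\<^sup>2) \<longlonglongrightarrow> 0"
proof -
  define m where "m n = expectation (Y n)" for n
  define a where "a n = expectation (X n)" for n
  define c where "c = max 1 (\<kappa> / \<tau>)"
  have "m n > 0" "a n \<ge> \<tau> * m n" for n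
    using expectation_Y_pos expectation_X_ge by (simp_all add: m_def a_def)
  then have "a n > 0" for n using mult_pos_pos[OF \<open>\<tau> > 0\<close>] by (meson less_le_trans)
  have X_le: "X n \<omega> / a n \<le> c * (Y n \<omega> / m n)" if "\<omega> \<in> space M" for n \<omega>
  proof -
    have "X n \<omega> / a n \<le> \<kappa> * Y n \<omega> / (\<tau> * m n)"
      using X_bounds[OF that, of n] \<open>a n \<ge> \<tau> * m n\<close> \<open>m n > 0\<close> \<open>\<tau> > 0\<close>
      by (intro frac_le) auto
    also have "\<dots> = (\<kappa> / \<tau>) * (Y n \<omega> / m n)" by simp
    also have "\<dots> \<le> c * (Y n \<omega> / m n)"
      using Y_nonneg[OF that] \<open>m n > 0\<close> by (intro mult_right_mono) (auto simp: c_def)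
    finally show ?thesis .
  qed
  have "conv_in_qm M (\<lambda>n \<omega>. X n \<omega> / a n) 1"
  proof (rule conv_in_qm_if_conv_in_prob_dominated)
    show "conv_in_prob M (\<lambda>n \<omega>. X n \<omega> / a n) 1" using assms(4) by (simp add: a_def)
    show "conv_in_qm M (\<lambda>n \<omega>. Y n \<omega> / m n) 1" using assms(3) by (simp add: m_def)
    show "0 \<le> X n \<omega> / a n \<and> X n \<omega> / a n \<le> c * (Y n \<omega> / m n)" if "\<omega> \<in> space M" for n \<omega>
      using X_bounds[OF that, of n] X_le[OF that] \<open>a n > 0\<close> by simp
  qed (simp_all add: c_def)
  moreover have "variance (X n) / (expectation (X n))\<^sup>2 = expectation (\<lambda>\<omega>. (X n \<omega> / a n - 1)\<^sup>2)" for n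
    using \<open>a n > 0\<close> unfolding a_def by (intro variance_div_expectation_sq) simp
  ultimately show ?thesis by (simp add: conv_in_qm_def)
qed

end

theorem lemma4p2:
  fixes M :: "'a measure" and X Y :: "nat \<Rightarrow> 'a \<Rightarrow> real" and \<kappa> :: real
  assumes "prob_space M"
    and "\<And>n. X n \<in> borel_measurable M"
    and "\<And>n. Y n \<in> borel_measurable M"
    and "\<kappa> > 0"
    and "\<And>n \<omega>. \<omega> \<in> space M \<Longrightarrow> 0 \<le> X n \<omega> \<and> X n \<omega> \<le> \<kappa> * Y n \<omega>"
    and "\<And>n. integrable M (Y n)"
    and "\<And>n. prob_space.expectation M (Y n) > 0"
    and "conv_in_prob M (\<lambda>n \<omega>. Y n \<omega> / prob_space.expectation M (Y n)) 1"
  shows "((\<lambda>n. prob_space.expectation M (X n) / prob_space.expectation M (Y n)) \<longlonglongrightarrow> 0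
            \<longleftrightarrow> conv_in_prob M (\<lambda>n \<omega>. X n \<omega> / Y n \<omega>) 0)
       \<and> (\<forall>\<tau>::real. \<tau> > 0
            \<longrightarrow> (\<forall>n. prob_space.expectation M (X n) \<ge> \<tau> * prob_space.expectation M (Y n))
            \<longrightarrow> conv_in_qm M (\<lambda>n \<omega>. Y n \<omega> / prob_space.expectation M (Y n)) 1
            \<longrightarrow> conv_in_prob M (\<lambda>n \<omega>. X n \<omega> / prob_space.expectation M (X n)) 1
            \<longrightarrow> (\<lambda>n. prob_space.variance M (X n) / (prob_space.expectation M (X n))^2) \<longlonglongrightarrow> 0)"
proof -
  interpret dominated_sequences M X Y \<kappa>
    by (rule dominated_sequences.intro[OF assms(1) dominated_sequences_axioms.intro[OF assms(2-7)]])
  have "(\<lambda>n. expectation (X n) / expectation (Y n)) \<longlonglongrightarrow> 0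
      \<longleftrightarrow> conv_in_prob M (\<lambda>n \<omega>. X n \<omega> / Y n \<omega>) 0"
    using conv_in_prob_ratio_if_expectation_ratio_tendsto[OF assms(8)]
      expectation_ratio_tendsto_if_conv_in_prob_ratio[OF assms(8)]
    by (rule iffI)
  moreover have "(\<lambda>n. variance (X n) / (expectation (X n))\<^sup>2) \<longlonglongrightarrow> 0"
    if "\<tau> > 0" "\<forall>n. expectation (X n) \<ge> \<tau> * expectation (Y n)"
      and "conv_in_qm M (\<lambda>n \<omega>. Y n \<omega> / expectation (Y n)) 1"
      and "conv_in_prob M (\<lambda>n \<omega>. X n \<omega> / expectation (X n)) 1" for \<tau> :: real
    using that by (intro relative_variance_tendsto_zero) auto
  ultimately show ?thesis by simp
qed

end
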